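(* Let $p$ be a prime and $C\subseteq\mathbb{F}_p^{2n}$ a symplectic self-dual code, i.e. $C=C^{\perp_s}$. Let $J\subsetneq\{1,\dots,n\}$ be nonempty and $\overline J=\{1,\dots,n\}\setminus J$. Then for each (unit) $|\varphi\rangle\in Q(C)$, the partial trace $\mathrm{tr}_{\overline J}[|\varphi\rangle\langle\varphi|]$ is a completely mixed state on $Q(\sigma_J(C))$.
   Context: Vectors of $\mathbb{F}_p^{2n}$ are written $(\mathbf a|\mathbf b)$, coordinate pairs $(a_j,b_j)$ indexed by $j\in\{1,\dots,n\}$; symplectic form $(\mathbf a|\mathbf b)\cdot_s(\mathbf c|\mathbf d)=\mathbf a\cdot\mathbf d-\mathbf b\cdot\mathbf c$, dual $C^{\perp_s}$. For $R\subseteq\{1,\dots,n\}$: $\pi_R(\mathbf a|\mathbf b)=(a_j|b_j)_{j\in R}$ and $\sigma_R(D)=\{\pi_R(\mathbf y):\mathbf y=(\mathbf a|\mathbf b)\in D,\ \mathrm{supp}(\mathbf a)\cup\mathrm{supp}(\mathbf b)\subseteq R\}$. Let $\xi=e^{2\pi\iota/p}$, $X(a)|x\rangle=|x+a\rangle$, $Z(b)|x\rangle=\xi^{bx}|x\rangle$ on $\mathbb C^p$, $E_{(\mathbf a,\mathbf b)}=\bigotimes_jX(a_j)Z(b_j)$. For a symplectic self-orthogonal $D\subseteq\mathbb F_p^{2m}$, $Q(D)\subseteq\mathbb C^{p^m}$ is the common eigenspace $\{v:Ev=\lambda(E)v\ \forall E\in S\}$, $S$ generated by the scalars $\xi^\ell\mathcal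 I$ and the $E_{\mathbf y}$, $\mathbf y\in D$, with $\lambda$ a character, $\lambda(\xi\mathcal I)=\xi$. The character for $Q(\sigma_J(C))$ is chosen compatibly: for $\mathbf z\in\sigma_J(C)$ and $\mathbf y\in C$ with $\pi_J(\mathbf y)=\mathbf z$ and zero outside $J$, $\lambda(E_{\mathbf z})=\lambda(E_{\mathbf y})$. A completely mixed state on a subspace $V$ is the equal probabilistic mixture of the states of an orthonormal basis of $V$, i.e. $P_V/\dim V$ with $P_V$ the orthogonal projector onto $V$. *)

theory Defs
  imports Complex_Main "HOL-Computational_Algebra.Primes"
begin

type_synonym fpvec = "(nat \<Rightarrow> int) \<times> (nat \<Rightarrow> int)"
type_synonym basis_idx = "nat \<Rightarrow> int"
type_synonym qvec = "basis_idx \<Rightarrow> complex"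
type_synonym kern = "basis_idx \<Rightarrow> basis_idx \<Rightarrow> complex"

definition fp_vecs :: "nat \<Rightarrow> nat set \<Rightarrow> fpvec set" where
  "fp_vecs p R = {(a,b). \<forall>j. (j \<in> R \<longrightarrow> 0 \<le> a j \<and> a j < int p \<and> 0 \<le> b j \<and> b j < int p)
                           \<and> (j \<notin> R \<longrightarrow> a j = 0 \<and> b j = 0)}"

definition vadd :: "nat \<Rightarrow> fpvec \<Rightarrow> fpvec \<Rightarrow> fpvec" where
  "vadd p y y' = ((\<lambda>j. (fst y j + fst y' j) mod int p), (\<lambda>j. (snd y j + snd y' j) mod int p))"

definition vsmult :: "nat \<Rightarrow> int \<Rightarrow> fpvec \<Rightarrow> fpvec" where
  "vsmult p c y = ((\<lambda>j. (c * fst y j) mod int p), (\<lambda>j. (c * snd y j) mod int p))"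

definition is_code :: "nat \<Rightarrow> nat set \<Rightarrow> fpvec set \<Rightarrow> bool" where
  "is_code p R C \<longleftrightarrow> C \<subseteq> fp_vecs p R \<and> ((\<lambda>_. 0), (\<lambda>_. 0)) \<in> C
     \<and> (\<forall>y\<in>C. \<forall>y'\<in>C. vadd p y y' \<in> C) \<and> (\<forall>c. \<forall>y\<in>C. vsmult p c y \<in> C)"

definition symp :: "nat \<Rightarrow> nat set \<Rightarrow> fpvec \<Rightarrow> fpvec \<Rightarrow> int" where
  "symp p R y y' = (\<Sum>j\<in>R. fst y j * snd y' j - snd y j * fst y' j) mod int p"

definition symp_dual :: "nat \<Rightarrow> nat set \<Rightarrow> fpvec set \<Rightarrow> fpvec set" where
  "symp_dual p R C = {y \<in> fp_vecs p R. \<forall>x\<in>C. symp p R y x = 0}"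

(* sigma_J(C): codewords supported in J.  Identifying F_p^{2|J|} with vectors
   supported on J, the projection pi_J acts as the identity on these. *)
definition sigma :: "nat set \<Rightarrow> fpvec set \<Rightarrow> fpvec set" where
  "sigma J C = {y \<in> C. \<forall>j. j \<notin> J \<longrightarrow> fst y j = 0 \<and> snd y j = 0}"

definition basis :: "nat \<Rightarrow> nat set \<Rightarrow> basis_idx set" where
  "basis p R = {x. (\<forall>j\<in>R. 0 \<le> x j \<and> x j < int p) \<and> (\<forall>j. j \<notin> R \<longrightarrow> x j = 0)}"

definition xi :: "nat \<Rightarrow> int \<Rightarrow> complex" where
  "xi p k = cis (2 * pi * of_int k / of_nat p)"

definition is_qvec :: "nat \<Rightarrow> nat set \<Rightarrow> qvec \<Rightarrow> bool" where
  "is_qvec p R v \<longleftrightarrow> (\<forall>x. x \<notin> basis p R \<longrightarrow> v x = 0)"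

definition inner :: "nat \<Rightarrow> nat set \<Rightarrow> qvec \<Rightarrow> qvec \<Rightarrow> complex" where
  "inner p R u v = (\<Sum>x\<in>basis p R. cnj (u x) * v x)"

(* operators as matrix kernels  A x' x = <x'|A|x>, vanishing off basis x basis *)
definition kid :: "nat \<Rightarrow> nat set \<Rightarrow> kern" where
  "kid p R x' x = (if x \<in> basis p R \<and> x' = x then 1 else 0)"

definition kscal :: "complex \<Rightarrow> kern \<Rightarrow> kern" where
  "kscal c A x' x = c * A x' x"

definition kmult :: "nat \<Rightarrow> nat set \<Rightarrow> kern \<Rightarrow> kern \<Rightarrow> kern" where
  "kmult p R A B x' x = (\<Sum>y\<in>basis p R. A x' y * B y x)"

definition kapply :: "nat \<Rightarrow> nat set \<Rightarrow> kern \<Rightarrow> qvec \<Rightarrow> qvec" where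
  "kapply p R A v x' = (\<Sum>x\<in>basis p R. A x' x * v x)"

(* E_(a,b) = tensor_j X(a_j) Z(b_j):  |x> \<mapsto> xi^(b.x) |x + a> *)
definition pauli :: "nat \<Rightarrow> nat set \<Rightarrow> fpvec \<Rightarrow> kern" where
  "pauli p R y x' x =
     (if x \<in> basis p R \<and> x' = (\<lambda>j. if j \<in> R then (x j + fst y j) mod int p else 0)
      then xi p (\<Sum>j\<in>R. snd y j * x j) else 0)"

inductive_set stab :: "nat \<Rightarrow> nat set \<Rightarrow> fpvec set \<Rightarrow> kern set"
  for p :: nat and R :: "nat set" and D :: "fpvec set" where
  scal: "kscal (xi p l) (kid p R) \<in> stab p R D"
| gen: "y \<in> D \<Longrightarrow> pauli p R y \<in> stab p R D"
| mult: "A \<in> stab p R D \<Longrightarrow> B \<in> stab p R D \<Longrightarrow> kmult p R A B \<in> stab p R D"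

definition is_char :: "nat \<Rightarrow> nat set \<Rightarrow> fpvec set \<Rightarrow> (kern \<Rightarrow> complex) \<Rightarrow> bool" where
  "is_char p R D lam \<longleftrightarrow>
     (\<forall>A\<in>stab p R D. \<forall>B\<in>stab p R D. lam (kmult p R A B) = lam A * lam B)
     \<and> lam (kscal (xi p 1) (kid p R)) = xi p 1"

definition qspace :: "nat \<Rightarrow> nat set \<Rightarrow> fpvec set \<Rightarrow> (kern \<Rightarrow> complex) \<Rightarrow> qvec set" where
  "qspace p R D lam = {v. is_qvec p R v \<and>
      (\<forall>A\<in>stab p R D. kapply p R A v = (\<lambda>x. lam A * v x))}"

definition proj_vec :: "qvec \<Rightarrow> kern" where
  "proj_vec v x' x = v x' * cnj (v x)"

definition ptrace :: "nat \<Rightarrow> nat set \<Rightarrow> nat set \<Rightarrow> kern \<Rightarrow> kern" where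
  "ptrace p Rall J rho x' x =
     (if x' \<in> basis p J \<and> x \<in> basis p J then
        (\<Sum>z\<in>basis p (Rall - J). rho (\<lambda>j. if j \<in> J then x' j else z j) (\<lambda>j. if j \<in> J then x j else z j))
      else 0)"

definition lin_span :: "qvec list \<Rightarrow> qvec set" where
  "lin_span es = {v. \<exists>c. v = (\<lambda>x. \<Sum>i<length es. c i * (es ! i) x)}"

definition is_onb :: "nat \<Rightarrow> nat set \<Rightarrow> qvec list \<Rightarrow> qvec set \<Rightarrow> bool" where
  "is_onb p R es V \<longleftrightarrow> (\<forall>i<length es. \<forall>k<length es.
        inner p R (es ! i) (es ! k) = (if i = k then 1 else 0)) \<and> lin_span es = V"

definition completely_mixed :: "nat \<Rightarrow> nat set \<Rightarrow> kern \<Rightarrow> qvec set \<Rightarrow> bool" where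
  "completely_mixed p R rho V \<longleftrightarrow> (\<exists>es. es \<noteq> [] \<and> is_onb p R es V \<and>
      rho = (\<lambda>x' x. (\<Sum>i<length es. (es ! i) x' * cnj ((es ! i) x)) / of_nat (length es)))"

end

theory Submission
  imports Defs "HOL-Library.Real_Mod"
begin

text \<open>Expand the reduced state \<open>\<rho>\<close> of \<open>|\<phi>\<rangle>\<langle>\<phi>|\<close> in the Pauli basis of the qudits in \<open>J\<close>:
  the coefficient of \<open>E\<^sub>z\<close> is the conjugated expectation \<open>\<langle>\<phi>|E\<^sub>z|\<phi>\<rangle>\<close>.
  For \<open>z \<notin> C\<close> self-duality gives some \<open>y \<in> C\<close> with nonzero symplectic product with \<open>z\<close>, so
  \<open>E\<^sub>y\<close> commutes with \<open>E\<^sub>z\<close> only up to a nontrivial phase and the expectation vanishes; for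
  \<open>z \<in> C\<close> it is the eigenvalue \<open>\<lambda>(E\<^sub>z)\<close>. Hence \<open>\<rho>\<close> is a combination of the \<open>E\<^sub>z\<close>,
  \<open>z \<in> \<sigma>\<^sub>J(C)\<close>, and acts on \<open>Q(\<sigma>\<^sub>J(C))\<close> as the scalar \<open>|\<sigma>\<^sub>J(C)| / p\<^bsup>|J|\<^esup>\<close>.
  The columns of \<open>\<rho>\<close> are combinations of slices of \<open>\<phi>\<close>, which are stabilized by
  \<open>\<sigma>\<^sub>J(C)\<close>, so the Hermitian \<open>\<rho>\<close> is this scalar times the orthogonal projector onto
  \<open>Q(\<sigma>\<^sub>J(C))\<close>, and \<open>tr \<rho> = 1\<close> identifies the scalar as \<open>1 / dim Q(\<sigma>\<^sub>J(C))\<close>.\<close>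

section \<open>Roots of unity\<close>

lemma xi_add: "xi p (k + l) = xi p k * xi p l"
  unfolding xi_def by (simp add: cis_mult add_divide_distrib distrib_left)

lemma xi_zero [simp]: "xi p 0 = 1"
  unfolding xi_def by simp

lemma xi_cnj: "cnj (xi p k) = xi p (- k)"
  unfolding xi_def by (simp add: cis_cnj)

lemma xi_cnj_mult [simp]: "cnj (xi p k) * xi p k = 1"
  by (metis xi_add xi_cnj add.left_inverse xi_zero)

lemma xi_mult_cnj [simp]: "xi p k * cnj (xi p k) = 1"
  by (metis xi_cnj_mult mult.commute)

lemma xi_nonzero [simp]: "xi p k \<noteq> 0"
  by (metis xi_cnj_mult mult_zero_right zero_neq_one)

lemma xi_power: "xi p k ^ m = xi p (k * int m)"
  by (induction m) (simp_all add: xi_add[symmetric] algebra_simps)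

lemma xi_multiple:
  assumes "p > 0"
  shows "xi p (int p * m) = 1"
proof -
  have "2 * pi * real_of_int (int p * m) / real p = 2 * pi * real_of_int m"
    using assms by simp
  then show ?thesis unfolding xi_def by simp
qed

lemma xi_mod:
  assumes "p > 0"
  shows "xi p (k mod int p) = xi p k"
proof -
  have "xi p k = xi p (k mod int p) * xi p (int p * (k div int p))"
    by (metis xi_add mod_mult_div_eq mult.commute)
  then show ?thesis using xi_multiple[OF assms] by simp
qed

lemma xi_cong: "p > 0 \<Longrightarrow> k mod int p = l mod int p \<Longrightarrow> xi p k = xi p l"
  by (metis xi_mod)

lemma xi_eq_1_iff:
  assumes "p > 0"
  shows "xi p k = 1 \<longleftrightarrow> k mod int p = 0"
proof
  assume "xi p k = 1"
  then obtain m where "2 * pi * real_of_int k / real p = of_int m * (2 * pi)"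
    unfolding xi_def cis_eq_1_iff by blast
  then have "real_of_int k = real_of_int m * real p"
    using assms by (simp add: field_simps)
  then have "k = m * int p"
    by (metis of_int_eq_iff of_int_mult of_int_of_nat_eq)
  then show "k mod int p = 0" by simp
next
  assume "k mod int p = 0"
  then show "xi p k = 1" using xi_mod[OF assms, of k] by simp
qed

section \<open>Computational basis and shifts\<close>

definition shift :: "nat \<Rightarrow> nat set \<Rightarrow> basis_idx \<Rightarrow> basis_idx \<Rightarrow> basis_idx" where
  "shift p R x a = (\<lambda>j. if j \<in> R then (x j + a j) mod int p else 0)"

definition dot_on :: "nat set \<Rightarrow> (nat \<Rightarrow> int) \<Rightarrow> (nat \<Rightarrow> int) \<Rightarrow> int" where
  "dot_on R b x = (\<Sum>j\<in>R. b j * x j)"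

lemma dot_on_commute: "dot_on R a b = dot_on R b a"
  unfolding dot_on_def by (simp add: mult.commute)

lemma finite_basis: "finite R \<Longrightarrow> finite (basis p R)"
proof -
  assume R: "finite R"
  have "basis p R \<subseteq> {f. \<forall>x. (x \<in> R \<longrightarrow> f x \<in> {0..<int p}) \<and> (x \<notin> R \<longrightarrow> f x = 0)}"
    unfolding basis_def by auto
  moreover have "finite {f. \<forall>x. (x \<in> R \<longrightarrow> f x \<in> {0..<int p}) \<and> (x \<notin> R \<longrightarrow> f x = (0::int))}"
    by (rule finite_set_of_finite_funs) (use R in auto)
  ultimately show ?thesis by (rule finite_subset)
qed

lemma basis_mod: "x \<in> basis p R \<Longrightarrow> j \<in> R \<Longrightarrow> x j mod int p = x j"
  unfolding basis_def by auto

lemma basis_outside: "x \<in> basis p R \<Longrightarrow> j \<notin> R \<Longrightarrow> x j = 0"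
  unfolding basis_def by auto

lemma basis_mono:
  assumes "p > 0" and "J \<subseteq> R" and x: "x \<in> basis p J"
  shows "x \<in> basis p R"
proof -
  have "0 \<le> x j \<and> x j < int p" if "j \<in> R" for j
    using x assms(1) unfolding basis_def by (cases "j \<in> J") auto
  moreover have "x j = 0" if "j \<notin> R" for j
    using x assms(2) that unfolding basis_def by blast
  ultimately show ?thesis unfolding basis_def by blast
qed

lemma fp_vecs_eq_basis_times: "fp_vecs p R = basis p R \<times> basis p R"
  unfolding fp_vecs_def basis_def by auto

lemma finite_fp_vecs: "finite R \<Longrightarrow> finite (fp_vecs p R)"
  by (simp add: fp_vecs_eq_basis_times finite_basis)

lemma shift_in_basis: "p > 0 \<Longrightarrow> shift p R x a \<in> basis p R"
  unfolding shift_def basis_def by auto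

lemma shift_commute_args: "shift p R x a = shift p R a x"
  unfolding shift_def by (rule ext) (simp add: add.commute)

lemma shift_shift: "shift p R (shift p R x a) b = shift p R x (\<lambda>j. a j + b j)"
  unfolding shift_def by (auto simp: fun_eq_iff mod_add_left_eq add.assoc)

lemma shift_commute: "shift p R (shift p R x a) b = shift p R (shift p R x b) a"
  unfolding shift_shift by (simp add: add.commute)

lemma shift_shift_uminus: "x \<in> basis p R \<Longrightarrow> shift p R (shift p R x a) (\<lambda>j. - a j) = x"
  unfolding shift_shift by (auto simp: fun_eq_iff shift_def basis_mod basis_outside)

lemma shift_inj:
  assumes "x \<in> basis p R" "x' \<in> basis p R" "shift p R x a = shift p R x' a"
  shows "x = x'"
  by (metis assms shift_shift_uminus)

lemma bij_betw_shift: "p > 0 \<Longrightarrow> bij_betw (\<lambda>x. shift p R x a) (basis p R) (basis p R)"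
  by (rule bij_betw_byWitness[where f' = "\<lambda>x. shift p R x (\<lambda>j. - a j)"])
    (use shift_shift_uminus[of _ p R a] shift_shift_uminus[of _ p R "\<lambda>j. - a j"]
       shift_in_basis[of p R] in auto)

lemma sum_shift: "p > 0 \<Longrightarrow> (\<Sum>x\<in>basis p R. f (shift p R x a)) = (\<Sum>x\<in>basis p R. f x)"
  using sum.reindex_bij_betw[OF bij_betw_shift] by blast

lemma basis_eq_shift: "p > 0 \<Longrightarrow> x' \<in> basis p R \<Longrightarrow> \<exists>x\<in>basis p R. x' = shift p R x a"
  using bij_betw_shift[of p R a] unfolding bij_betw_def by auto

lemma dot_on_shift_mod:
  "dot_on R b (shift p R x a) mod int p = (dot_on R b x + dot_on R b a) mod int p"
proof -
  have "dot_on R b (shift p R x a) mod int p = (\<Sum>j\<in>R. b j * ((x j + a j) mod int p)) mod int p"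
    unfolding dot_on_def shift_def by simp
  also have "\<dots> = (\<Sum>j\<in>R. b j * ((x j + a j) mod int p) mod int p) mod int p"
    by (simp add: mod_sum_eq)
  also have "\<dots> = (\<Sum>j\<in>R. b j * (x j + a j) mod int p) mod int p"
    by (simp add: mod_mult_right_eq)
  also have "\<dots> = (\<Sum>j\<in>R. b j * (x j + a j)) mod int p"
    by (simp add: mod_sum_eq)
  also have "\<dots> = (dot_on R b x + dot_on R b a) mod int p"
    unfolding dot_on_def by (simp add: distrib_left sum.distrib)
  finally show ?thesis .
qed

lemma xi_dot_on_shift:
  "p > 0 \<Longrightarrow> xi p (dot_on R b (shift p R x a)) = xi p (dot_on R b x) * xi p (dot_on R b a)"
  by (metis xi_add xi_cong dot_on_shift_mod)

section \<open>Pauli operators\<close>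

lemma pauli_eq_shift:
  "pauli p R y x' x =
     (if x \<in> basis p R \<and> x' = shift p R x (fst y) then xi p (dot_on R (snd y) x) else 0)"
  unfolding pauli_def shift_def dot_on_def by simp

lemma kapply_pauli_shift:
  assumes "p > 0" and x: "x \<in> basis p R" and "finite R"
  shows "kapply p R (pauli p R y) v (shift p R x (fst y)) = xi p (dot_on R (snd y) x) * v x"
proof -
  have "kapply p R (pauli p R y) v (shift p R x (fst y))
      = (\<Sum>x''\<in>basis p R. if x'' = x then xi p (dot_on R (snd y) x) * v x else 0)"
    unfolding kapply_def pauli_eq_shift
    by (rule sum.cong[OF refl]) (use shift_inj[OF _ x, of _ "fst y"] in auto)
  also have "\<dots> = xi p (dot_on R (snd y) x) * v x"
    using x finite_basis[OF \<open>finite R\<close>] by simp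
  finally show ?thesis .
qed

lemma kapply_pauli_outside:
  "p > 0 \<Longrightarrow> x' \<notin> basis p R \<Longrightarrow> kapply p R (pauli p R y) v x' = 0"
  unfolding kapply_def pauli_eq_shift
  by (rule sum.neutral) (auto dest: shift_in_basis)

lemma pauli_eigen_iff:
  assumes p: "p > 0" and fin: "finite R" and v: "is_qvec p R v"
  shows "kapply p R (pauli p R y) v = (\<lambda>x. c * v x) \<longleftrightarrow>
         (\<forall>x\<in>basis p R. xi p (dot_on R (snd y) x) * v x = c * v (shift p R x (fst y)))"
proof
  assume "kapply p R (pauli p R y) v = (\<lambda>x. c * v x)"
  then show "\<forall>x\<in>basis p R. xi p (dot_on R (snd y) x) * v x = c * v (shift p R x (fst y))"
    using kapply_pauli_shift[OF p _ fin, of _ y v] by metis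
next
  assume h: "\<forall>x\<in>basis p R. xi p (dot_on R (snd y) x) * v x = c * v (shift p R x (fst y))"
  show "kapply p R (pauli p R y) v = (\<lambda>x. c * v x)"
  proof
    fix x'
    show "kapply p R (pauli p R y) v x' = c * v x'"
    proof (cases "x' \<in> basis p R")
      case True
      then obtain x where "x \<in> basis p R" "x' = shift p R x (fst y)"
        using basis_eq_shift[OF p] by blast
      then show ?thesis using kapply_pauli_shift[OF p _ fin] h by simp
    next
      case False
      then show ?thesis using kapply_pauli_outside[OF p False] v unfolding is_qvec_def by simp
    qed
  qed
qed

lemma inner_pauli_right:
  assumes p: "p > 0" and fin: "finite R"
  shows "inner p R w (kapply p R (pauli p R y) v)
     = (\<Sum>x\<in>basis p R. cnj (w (shift p R x (fst y))) * xi p (dot_on R (snd y) x) * v x)"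
proof -
  have "inner p R w (kapply p R (pauli p R y) v)
      = (\<Sum>x\<in>basis p R. cnj (w (shift p R x (fst y)))
            * kapply p R (pauli p R y) v (shift p R x (fst y)))"
    unfolding inner_def using sum_shift[OF p, of "\<lambda>x. cnj (w x) * kapply p R (pauli p R y) v x"]
    by simp
  then show ?thesis
    using kapply_pauli_shift[OF p _ fin] by (simp add: mult.assoc)
qed

section \<open>Character sums\<close>

lemma sum_xi_multiples:
  assumes p: "p > 1"
  shows "(\<Sum>t\<in>{0..<int p}. xi p (t * d)) = (if d mod int p = 0 then of_nat p else 0)"
proof -
  have p0: "p > 0" using p by simp
  have "{0..<int p} = int ` {..<p}"
    by (simp add: image_int_atLeastLessThan lessThan_atLeast0)
  then have eq: "(\<Sum>t\<in>{0..<int p}. xi p (t * d)) = (\<Sum>i<p. xi p d ^ i)"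
    by (simp add: sum.reindex xi_power mult.commute)
  show ?thesis
  proof (cases "d mod int p = 0")
    case True
    then show ?thesis using eq xi_eq_1_iff[OF p0, of d] by simp
  next
    case False
    then have ne: "xi p d \<noteq> 1" using xi_eq_1_iff[OF p0] by blast
    have "xi p d ^ p = 1" using xi_power[of p d p] xi_multiple[OF p0, of d] by (simp add: mult.commute)
    then show ?thesis using False eq geometric_sum[OF ne, of p] by simp
  qed
qed

lemma basis_empty: "basis p {} = {\<lambda>_. 0}"
  unfolding basis_def by auto

lemma basis_insert:
  assumes "j \<notin> J"
  shows "basis p (insert j J) = (\<lambda>(t, b). b(j := t)) ` ({0..<int p} \<times> basis p J)"
proof (rule set_eqI, rule iffI)
  fix x assume x: "x \<in> basis p (insert j J)"
  have "x = (x(j := 0))(j := x j)" by simp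
  moreover have "x(j := 0) \<in> basis p J" using x assms unfolding basis_def by auto
  moreover have "x j \<in> {0..<int p}" using x unfolding basis_def by auto
  ultimately show "x \<in> (\<lambda>(t, b). b(j := t)) ` ({0..<int p} \<times> basis p J)"
    by (intro rev_image_eqI[where x = "(x j, x(j := 0))"]) auto
qed (auto simp: basis_def)

lemma inj_on_basis_insert:
  assumes "j \<notin> J"
  shows "inj_on (\<lambda>(t, b). b(j := t)) ({0..<int p} \<times> basis p J)"
proof (rule inj_onI, clarify)
  fix t b t' b'
  assume b: "b \<in> basis p J" "b' \<in> basis p J" and e: "b(j := t) = b'(j := t')"
  have "b = b'"
  proof
    fix i show "b i = b' i"
      using fun_cong[OF e, of i] basis_outside[OF b(1), of j] basis_outside[OF b(2), of j] assms
      by (cases "i = j") auto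
  qed
  then show "t = t' \<and> b = b'" using fun_cong[OF e, of j] by simp
qed

lemma sum_xi_dot_on:
  assumes p: "p > 1" and fin: "finite J"
  shows "(\<Sum>b\<in>basis p J. xi p (dot_on J b d))
           = (if \<forall>j\<in>J. d j mod int p = 0 then of_nat p ^ card J else 0)"
  using fin
proof (induction J rule: finite_induct)
  case empty
  then show ?case by (simp add: basis_empty dot_on_def)
next
  case (insert j J)
  have dot: "dot_on (insert j J) (b(j := t)) d = t * d j + dot_on J b d" for b t
    unfolding dot_on_def using insert(1,2) by (simp add: sum.insert) (rule sum.cong, auto)
  have "(\<Sum>b\<in>basis p (insert j J). xi p (dot_on (insert j J) b d))
      = (\<Sum>(t, b)\<in>{0..<int p} \<times> basis p J. xi p (t * d j) * xi p (dot_on J b d))"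
    unfolding basis_insert[OF insert(2)] sum.reindex[OF inj_on_basis_insert[OF insert(2)]]
    by (simp add: case_prod_beta dot xi_add)
  also have "\<dots> = (\<Sum>t\<in>{0..<int p}. xi p (t * d j)) * (\<Sum>b\<in>basis p J. xi p (dot_on J b d))"
    by (simp add: sum_product sum.cartesian_product)
  also have "\<dots> = (if \<forall>i\<in>insert j J. d i mod int p = 0 then of_nat p ^ card (insert j J) else 0)"
    unfolding sum_xi_multiples[OF p] insert(3) using insert(1,2) by auto
  finally show ?case .
qed

lemma sum_xi_dot_on_orthogonal:
  assumes p: "p > 1" and fin: "finite J" and x: "x \<in> basis p J" and u: "u \<in> basis p J"
  shows "(\<Sum>b\<in>basis p J. cnj (xi p (dot_on J b x)) * xi p (dot_on J b u))
           = (if x = u then of_nat p ^ card J else 0)"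
proof -
  have "(\<Sum>b\<in>basis p J. cnj (xi p (dot_on J b x)) * xi p (dot_on J b u))
      = (\<Sum>b\<in>basis p J. xi p (dot_on J b (\<lambda>j. u j - x j)))"
    by (rule sum.cong[OF refl])
      (simp add: xi_cnj xi_add[symmetric] dot_on_def sum_subtractf right_diff_distrib)
  also have "\<dots> = (if \<forall>j\<in>J. (u j - x j) mod int p = 0 then of_nat p ^ card J else 0)"
    by (rule sum_xi_dot_on[OF p fin])
  also have "(\<forall>j\<in>J. (u j - x j) mod int p = 0) \<longleftrightarrow> x = u"
  proof
    assume h: "\<forall>j\<in>J. (u j - x j) mod int p = 0"
    show "x = u"
    proof
      fix j show "x j = u j"
      proof (cases "j \<in> J")
        case True
        then have "x j mod int p = u j mod int p"
          using h by (metis mod_eq_dvd_iff dvd_eq_mod_eq_0)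
        then show ?thesis using basis_mod[OF x True] basis_mod[OF u True] by simp
      qed (simp add: basis_outside[OF x] basis_outside[OF u])
    qed
  qed simp
  finally show ?thesis .
qed

section \<open>Splitting the register\<close>

definition merge :: "nat set \<Rightarrow> basis_idx \<Rightarrow> basis_idx \<Rightarrow> basis_idx" where
  "merge J u w = (\<lambda>j. if j \<in> J then u j else w j)"

lemma bij_betw_merge:
  assumes "J \<subseteq> R"
  shows "bij_betw (\<lambda>(u, w). merge J u w) (basis p J \<times> basis p (R - J)) (basis p R)"
  by (rule bij_betw_byWitness[where f' = "\<lambda>x. (\<lambda>j. if j \<in> J then x j else 0, \<lambda>j. if j \<in> R - J then x j else 0)"])
    (use assms in \<open>auto simp: merge_def basis_def fun_eq_iff\<close>)

lemma merge_in_basis: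
  "J \<subseteq> R \<Longrightarrow> u \<in> basis p J \<Longrightarrow> w \<in> basis p (R - J) \<Longrightarrow> merge J u w \<in> basis p R"
  using bij_betw_merge[of J R p] unfolding bij_betw_def by auto

lemma sum_basis_merge:
  assumes "J \<subseteq> R"
  shows "(\<Sum>x\<in>basis p R. f x) = (\<Sum>u\<in>basis p J. \<Sum>w\<in>basis p (R - J). f (merge J u w))"
proof -
  have "(\<Sum>x\<in>basis p R. f x) = (\<Sum>(u, w)\<in>basis p J \<times> basis p (R - J). f (merge J u w))"
    using sum.reindex_bij_betw[OF bij_betw_merge[OF assms], of f] by (simp add: case_prod_beta)
  then show ?thesis by (simp add: sum.cartesian_product)
qed

lemma shift_merge:
  assumes "J \<subseteq> R" and "w \<in> basis p (R - J)" and "a \<in> basis p J"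
  shows "shift p R (merge J u w) a = merge J (shift p J u a) w"
  using assms basis_outside[OF assms(3)] basis_outside[OF assms(2)] basis_mod[OF assms(2)]
  by (auto simp: shift_def merge_def fun_eq_iff)

lemma dot_on_merge:
  assumes "finite R" and "J \<subseteq> R" and b: "b \<in> basis p J"
  shows "dot_on R b (merge J u w) = dot_on J b u"
proof -
  have "dot_on R b (merge J u w) = (\<Sum>j\<in>J. b j * merge J u w j)"
    unfolding dot_on_def
    by (rule sum.mono_neutral_right[OF assms(1,2)]) (use basis_outside[OF b] in auto)
  then show ?thesis unfolding dot_on_def merge_def by simp
qed

section \<open>Expansion in the Pauli basis\<close>

text \<open>\<open>pauli_coeff p J z M\<close> is the trace of \<open>E\<^sub>z\<^sup>\<dagger> M\<close>.\<close>

definition pauli_coeff :: "nat \<Rightarrow> nat set \<Rightarrow> fpvec \<Rightarrow> kern \<Rightarrow> complex" where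
  "pauli_coeff p J z M = (\<Sum>x\<in>basis p J. cnj (xi p (dot_on J (snd z) x)) * M (shift p J x (fst z)) x)"

lemma sum_if_shift:
  assumes p: "p > 0" and fin: "finite R" and u: "u \<in> basis p R" and u': "u' \<in> basis p R"
  shows "(\<Sum>a\<in>basis p R. if u' = shift p R u a then c else 0) = c"
proof -
  obtain a0 where a0: "a0 \<in> basis p R" "u' = shift p R a0 u"
    using basis_eq_shift[OF p u'] by blast
  have "u' = shift p R u a \<longleftrightarrow> a = a0" if "a \<in> basis p R" for a
    using shift_inj[OF that a0(1), of u] a0(2) shift_commute_args[of p R u] by metis
  then have "(\<Sum>a\<in>basis p R. if u' = shift p R u a then c else 0)
      = (\<Sum>a\<in>basis p R. if a = a0 then c else 0)"
    by (intro sum.cong) auto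
  then show ?thesis using a0(1) finite_basis[OF fin] by simp
qed

lemma pauli_expansion:
  assumes p: "p > 1" and fin: "finite J"
    and M: "\<And>u' u. u' \<notin> basis p J \<or> u \<notin> basis p J \<Longrightarrow> M u' u = 0"
  shows "M u' u = (\<Sum>z\<in>fp_vecs p J. pauli_coeff p J z M * pauli p J z u' u) / of_nat p ^ card J"
proof (cases "u' \<in> basis p J \<and> u \<in> basis p J")
  case False
  then have "pauli p J z u' u = 0" for z
    using shift_in_basis[of p J] p unfolding pauli_eq_shift by auto
  then show ?thesis using M False by simp
next
  case True
  then have u: "u \<in> basis p J" and u': "u' \<in> basis p J" by auto
  have p0: "p > 0" using p by simp
  let ?P = "of_nat p ^ card J :: complex"
  have fixed_shift: "(\<Sum>b\<in>basis p J. pauli_coeff p J (a, b) M * pauli p J (a, b) u' u)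
      = (if u' = shift p J u a then M u' u * ?P else 0)" for a
  proof (cases "u' = shift p J u a")
    case True
    have "(\<Sum>b\<in>basis p J. pauli_coeff p J (a, b) M * pauli p J (a, b) u' u)
        = (\<Sum>b\<in>basis p J. \<Sum>x\<in>basis p J.
             M (shift p J x a) x * (cnj (xi p (dot_on J b x)) * xi p (dot_on J b u)))"
      using True u unfolding pauli_coeff_def pauli_eq_shift
      by (simp add: sum_distrib_left sum_distrib_right mult_ac)
    also have "\<dots> = (\<Sum>x\<in>basis p J.
             M (shift p J x a) x * (\<Sum>b\<in>basis p J. cnj (xi p (dot_on J b x)) * xi p (dot_on J b u)))"
      by (subst sum.swap) (simp add: sum_distrib_left)
    also have "\<dots> = (\<Sum>x\<in>basis p J. if x = u then M (shift p J u a) u * ?P else 0)"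
      by (intro sum.cong) (simp_all add: sum_xi_dot_on_orthogonal[OF p fin _ u])
    also have "\<dots> = M u' u * ?P"
      using True u finite_basis[OF fin] by simp
    finally show ?thesis using True by simp
  qed (simp add: pauli_eq_shift)
  have "(\<Sum>z\<in>fp_vecs p J. pauli_coeff p J z M * pauli p J z u' u)
      = (\<Sum>a\<in>basis p J. \<Sum>b\<in>basis p J. pauli_coeff p J (a, b) M * pauli p J (a, b) u' u)"
    unfolding fp_vecs_eq_basis_times by (simp add: sum.cartesian_product)
  also have "\<dots> = M u' u * ?P"
    unfolding fixed_shift by (rule sum_if_shift[OF p0 fin u u'])
  finally show ?thesis using p by simp
qed

section \<open>Stabilizer spaces\<close>

lemma kapply_kscal_kid:
  assumes fin: "finite R" and v: "is_qvec p R v"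
  shows "kapply p R (kscal c (kid p R)) v = (\<lambda>x. c * v x)"
proof
  fix x'
  have "kapply p R (kscal c (kid p R)) v x' = (\<Sum>x\<in>basis p R. if x = x' then c * v x' else 0)"
    unfolding kapply_def kscal_def kid_def by (rule sum.cong) auto
  then show "kapply p R (kscal c (kid p R)) v x' = c * v x'"
    using finite_basis[OF fin] v unfolding is_qvec_def by auto
qed

lemma kapply_kmult: "kapply p R (kmult p R A B) v = kapply p R A (kapply p R B v)"
proof
  fix x'
  have "kapply p R (kmult p R A B) v x' = (\<Sum>x\<in>basis p R. \<Sum>y\<in>basis p R. A x' y * (B y x * v x))"
    unfolding kapply_def kmult_def by (simp add: sum_distrib_right mult.assoc)
  also have "\<dots> = (\<Sum>y\<in>basis p R. \<Sum>x\<in>basis p R. A x' y * (B y x * v x))"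
    by (rule sum.swap)
  finally show "kapply p R (kmult p R A B) v x' = kapply p R A (kapply p R B v) x'"
    unfolding kapply_def by (simp add: sum_distrib_left)
qed

lemma kapply_add: "kapply p R A (\<lambda>x. u x + v x) = (\<lambda>x. kapply p R A u x + kapply p R A v x)"
  unfolding kapply_def by (simp add: distrib_left sum.distrib)

lemma kapply_scale: "kapply p R A (\<lambda>x. c * v x) = (\<lambda>x. c * kapply p R A v x)"
  unfolding kapply_def by (simp add: sum_distrib_left mult_ac)

lemma kmult_kscal_kid:
  assumes fin: "finite R"
  shows "kmult p R (kscal c (kid p R)) (kscal d (kid p R)) = kscal (c * d) (kid p R)"
proof (intro ext)
  fix x' x
  have "kmult p R (kscal c (kid p R)) (kscal d (kid p R)) x' x
      = (\<Sum>y\<in>basis p R. if y = x then (if x \<in> basis p R \<and> x' = x then c * d else 0) else 0)"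
    unfolding kmult_def kscal_def kid_def by (rule sum.cong) auto
  then show "kmult p R (kscal c (kid p R)) (kscal d (kid p R)) x' x = kscal (c * d) (kid p R) x' x"
    using finite_basis[OF fin] unfolding kscal_def kid_def by auto
qed

lemma is_char_scalar:
  assumes fin: "finite R" and p: "p > 0" and ch: "is_char p R D lam"
  shows "lam (kscal (xi p l) (kid p R)) = xi p l"
proof -
  let ?S = "\<lambda>m. kscal (xi p m) (kid p R)"
  have mult: "lam (kmult p R (?S k) (?S m)) = lam (?S k) * lam (?S m)" for k m
    using ch stab.scal unfolding is_char_def by blast
  have S1: "lam (?S 1) = xi p 1" using ch unfolding is_char_def by blast
  have "lam (?S 1) = lam (?S 0) * lam (?S 1)"
    using mult[of 0 1] kmult_kscal_kid[OF fin] by simp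
  then have S0: "lam (?S 0) = 1" using S1 by simp
  have nat_case: "lam (?S (int m)) = xi p (int m)" for m
  proof (induction m)
    case (Suc m)
    have "lam (?S (int (Suc m))) = lam (?S 1) * lam (?S (int m))"
      using mult[of 1 "int m"] kmult_kscal_kid[OF fin] by (simp add: xi_add[symmetric] add.commute)
    then show ?case using Suc S1 by (simp add: xi_add[symmetric] add.commute)
  qed (use S0 in simp)
  have "xi p l = xi p (int (nat (l mod int p)))"
    using xi_mod[OF p, of l] p by simp
  then show ?thesis using nat_case by metis
qed

lemma qspaceI_generators:
  assumes fin: "finite R" and p: "p > 0" and ch: "is_char p R D lam" and v: "is_qvec p R v"
    and gen: "\<And>y. y \<in> D \<Longrightarrow> kapply p R (pauli p R y) v = (\<lambda>x. lam (pauli p R y) * v x)"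
  shows "v \<in> qspace p R D lam"
proof -
  have "kapply p R A v = (\<lambda>x. lam A * v x)" if "A \<in> stab p R D" for A
    using that
  proof (induction rule: stab.induct)
    case (scal l)
    then show ?case using kapply_kscal_kid[OF fin v] is_char_scalar[OF fin p ch] by simp
  next
    case (mult A B)
    have "lam (kmult p R A B) = lam A * lam B" using ch mult(1,2) unfolding is_char_def by blast
    then show ?case unfolding kapply_kmult mult(4) kapply_scale mult(3) by (simp add: mult_ac)
  qed (rule gen)
  then show ?thesis unfolding qspace_def using v by blast
qed

lemma qspace_pauli:
  "v \<in> qspace p R D lam \<Longrightarrow> y \<in> D \<Longrightarrow> kapply p R (pauli p R y) v = (\<lambda>x. lam (pauli p R y) * v x)"
  unfolding qspace_def using stab.gen by blast

lemma qspace_is_qvec: "v \<in> qspace p R D lam \<Longrightarrow> is_qvec p R v"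
  unfolding qspace_def by blast

section \<open>Orthonormal bases\<close>

lemma inner_cnj: "cnj (inner p R u v) = inner p R v u"
  unfolding inner_def by (simp add: mult.commute)

lemma inner_sum_right:
  "inner p R u (\<lambda>x. \<Sum>s\<in>S. c s * f s x) = (\<Sum>s\<in>S. c s * inner p R u (f s))"
  unfolding inner_def sum_distrib_left by (subst sum.swap) (simp add: mult.left_commute)

lemma inner_sum_left:
  "inner p R (\<lambda>x. \<Sum>s\<in>S. c s * f s x) u = (\<Sum>s\<in>S. cnj (c s) * inner p R (f s) u)"
  unfolding inner_def cnj_sum complex_cnj_mult sum_distrib_left sum_distrib_right
  by (subst sum.swap) (simp add: mult.assoc)

lemma inner_diff_right: "inner p R u (\<lambda>x. a x - b x) = inner p R u a - inner p R u b"
  unfolding inner_def by (simp add: right_diff_distrib sum_subtractf)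

lemma inner_scale_right: "inner p R u (\<lambda>x. c * a x) = c * inner p R u a"
  unfolding inner_def by (simp add: sum_distrib_left mult_ac)

lemma inner_scale_left: "inner p R (\<lambda>x. c * a x) u = cnj c * inner p R a u"
  unfolding inner_def by (simp add: sum_distrib_left mult_ac)

lemma inner_self: "inner p R w w = complex_of_real (\<Sum>x\<in>basis p R. (cmod (w x))\<^sup>2)"
  unfolding inner_def of_real_sum complex_norm_square by (simp add: mult.commute)

lemma inner_self_eq_0:
  assumes fin: "finite R" and w: "is_qvec p R w" and "inner p R w w = 0"
  shows "w = (\<lambda>x. 0)"
proof
  fix x
  have "(\<Sum>x\<in>basis p R. (cmod (w x))\<^sup>2) = 0"
    using assms(3) inner_self[of p R w] by (metis of_real_eq_0_iff)
  then have "\<forall>x\<in>basis p R. (cmod (w x))\<^sup>2 = 0"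
    using sum_nonneg_eq_0_iff[OF finite_basis[OF fin], where f = "\<lambda>x. (cmod (w x))\<^sup>2"] by simp
  then show "w x = 0" using w unfolding is_qvec_def by (cases "x \<in> basis p R") auto
qed

lemma exists_normalization:
  assumes "inner p R w w \<noteq> 0"
  shows "\<exists>s. s \<noteq> 0 \<and> inner p R (\<lambda>x. w x / s) (\<lambda>x. w x / s) = 1"
proof -
  define N where "N = (\<Sum>x\<in>basis p R. (cmod (w x))\<^sup>2)"
  have N: "inner p R w w = complex_of_real N" unfolding N_def by (rule inner_self)
  have "N > 0" using assms N unfolding N_def
    by (metis (no_types, lifting) less_eq_real_def of_real_0 sum_nonneg zero_le_power2)
  define s where "s = complex_of_real (sqrt N)"
  have e: "(\<lambda>x. w x / s) = (\<lambda>x. (1 / s) * w x)" by simp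
  have "inner p R (\<lambda>x. w x / s) (\<lambda>x. w x / s) = cnj (1 / s) * ((1 / s) * of_real N)"
    by (simp only: e inner_scale_left inner_scale_right N)
  also have "\<dots> = 1"
    using \<open>N > 0\<close> unfolding s_def by (simp flip: of_real_mult of_real_divide)
  finally have "inner p R (\<lambda>x. w x / s) (\<lambda>x. w x / s) = 1" .
  moreover have "s \<noteq> 0" using \<open>N > 0\<close> unfolding s_def by simp
  ultimately show ?thesis by blast
qed

definition is_subspace :: "qvec set \<Rightarrow> bool" where
  "is_subspace W \<longleftrightarrow> (\<lambda>x. 0) \<in> W \<and> (\<forall>u\<in>W. \<forall>v\<in>W. (\<lambda>x. u x + v x) \<in> W)
     \<and> (\<forall>c. \<forall>v\<in>W. (\<lambda>x. c * v x) \<in> W)"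

lemma subspace_add: "is_subspace W \<Longrightarrow> u \<in> W \<Longrightarrow> v \<in> W \<Longrightarrow> (\<lambda>x. u x + v x) \<in> W"
  unfolding is_subspace_def by blast

lemma subspace_scale: "is_subspace W \<Longrightarrow> v \<in> W \<Longrightarrow> (\<lambda>x. c * v x) \<in> W"
  unfolding is_subspace_def by blast

lemma subspace_sum:
  assumes W: "is_subspace W" and "finite S" and "\<And>s. s \<in> S \<Longrightarrow> f s \<in> W"
  shows "(\<lambda>x. \<Sum>s\<in>S. c s * f s x) \<in> W"
  using assms(2,3)
proof (induction S rule: finite_induct)
  case empty
  then show ?case using W unfolding is_subspace_def by simp
next
  case (insert s S)
  then show ?case
    using subspace_add[OF W] subspace_scale[OF W, of "f s" "c s"] by simp
qed

lemma subspace_qspace: "is_subspace (qspace p R D lam)"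
proof -
  have "kapply p R A (\<lambda>x. 0) = (\<lambda>x. 0)" for A unfolding kapply_def by simp
  then show ?thesis
    unfolding is_subspace_def qspace_def is_qvec_def
    by (simp add: kapply_add kapply_scale distrib_left mult.left_commute)
qed

lemma subspace_lin_span: "is_subspace (lin_span es)"
proof -
  have "(\<lambda>x. u x + v x) \<in> lin_span es" if "u \<in> lin_span es" "v \<in> lin_span es" for u v
  proof -
    from that obtain c d where "u = (\<lambda>x. \<Sum>i<length es. c i * (es ! i) x)"
      and "v = (\<lambda>x. \<Sum>i<length es. d i * (es ! i) x)"
      unfolding lin_span_def by blast
    then show ?thesis unfolding lin_span_def
      by (auto intro!: exI[where x = "\<lambda>i. c i + d i"] simp: sum.distrib distrib_right)
  qed
  moreover have "(\<lambda>x. k * v x) \<in> lin_span es" if "v \<in> lin_span es" for k v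
  proof -
    from that obtain c where "v = (\<lambda>x. \<Sum>i<length es. c i * (es ! i) x)"
      unfolding lin_span_def by blast
    then show ?thesis unfolding lin_span_def
      by (auto intro!: exI[where x = "\<lambda>i. k * c i"] simp: sum_distrib_left mult.assoc)
  qed
  moreover have "(\<lambda>x. 0) \<in> lin_span es"
    unfolding lin_span_def by (auto intro!: exI[where x = "\<lambda>_. 0"])
  ultimately show ?thesis unfolding is_subspace_def by blast
qed

lemma in_lin_span: "e \<in> set es \<Longrightarrow> e \<in> lin_span es"
proof -
  assume "e \<in> set es"
  then obtain i where i: "i < length es" "e = es ! i" by (metis in_set_conv_nth)
  have "(\<Sum>k<length es. (if k = i then 1 else 0) * (es ! k) x)
      = (\<Sum>k<length es. if k = i then (es ! k) x else 0)" for x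
    by (rule sum.cong) auto
  then have "(\<Sum>k<length es. (if k = i then 1 else 0) * (es ! k) x) = e x" for x
    using i by simp
  then show ?thesis
    unfolding lin_span_def by (auto intro!: exI[where x = "\<lambda>k. if k = i then 1 else (0::complex)"])
qed

lemma lin_span_subset:
  assumes "is_subspace W" and "set es \<subseteq> W"
  shows "lin_span es \<subseteq> W"
proof
  fix v assume "v \<in> lin_span es"
  then obtain c where "v = (\<lambda>x. \<Sum>i<length es. c i * (es ! i) x)" unfolding lin_span_def by blast
  then show "v \<in> W" using assms nth_mem by (auto intro!: subspace_sum)
qed

lemma lin_span_mono: "set es \<subseteq> lin_span vs \<Longrightarrow> lin_span es \<subseteq> lin_span vs"
  using lin_span_subset subspace_lin_span by blast

lemma lin_span_is_qvec:
  assumes "\<forall>v\<in>set vs. is_qvec p R v" and "u \<in> lin_span vs"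
  shows "is_qvec p R u"
proof -
  obtain c where u: "u = (\<lambda>x. \<Sum>i<length vs. c i * (vs ! i) x)"
    using assms(2) unfolding lin_span_def by blast
  have "(vs ! i) x = 0" if "i < length vs" "x \<notin> basis p R" for i x
    using assms(1) nth_mem[OF that(1)] that(2) unfolding is_qvec_def by blast
  then show ?thesis unfolding is_qvec_def u by simp
qed

definition orthonormal :: "nat \<Rightarrow> nat set \<Rightarrow> qvec list \<Rightarrow> bool" where
  "orthonormal p R es \<longleftrightarrow>
     (\<forall>i<length es. \<forall>k<length es. inner p R (es ! i) (es ! k) = (if i = k then 1 else 0))"

lemma is_onb_iff: "is_onb p R es V \<longleftrightarrow> orthonormal p R es \<and> lin_span es = V"
  unfolding is_onb_def orthonormal_def ..

lemma inner_orthogonal_residual: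
  assumes "orthonormal p R es" and k: "k < length es"
  shows "inner p R (es ! k) (\<lambda>x. d x - (\<Sum>i<length es. inner p R (es ! i) d * (es ! i) x)) = 0"
proof -
  have "(\<Sum>i<length es. inner p R (es ! i) d * inner p R (es ! k) (es ! i))
      = (\<Sum>i<length es. if i = k then inner p R (es ! k) d else 0)"
    using assms unfolding orthonormal_def by (intro sum.cong) auto
  then show ?thesis using k unfolding inner_diff_right inner_sum_right by simp
qed

lemma inner_lin_span_orthogonal:
  assumes "\<And>k. k < length es \<Longrightarrow> inner p R (es ! k) r = 0" and "w \<in> lin_span es"
  shows "inner p R w r = 0"
proof -
  obtain c where "w = (\<lambda>x. \<Sum>i<length es. c i * (es ! i) x)"
    using assms(2) unfolding lin_span_def by blast
  then show ?thesis using assms(1) by (simp add: inner_sum_left)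
qed

lemma orthonormal_snoc:
  assumes "orthonormal p R es" and "inner p R e e = 1"
    and "\<And>k. k < length es \<Longrightarrow> inner p R (es ! k) e = 0"
  shows "orthonormal p R (es @ [e])"
  unfolding orthonormal_def
proof (intro allI impI)
  have "inner p R e (es ! k) = 0" if "k < length es" for k
    by (metis assms(3)[OF that] inner_cnj complex_cnj_zero)
  fix i k assume "i < length (es @ [e])" "k < length (es @ [e])"
  then consider "i < length es" "k < length es" | "i < length es" "k = length es"
    | "i = length es" "k < length es" | "i = length es" "k = length es"
    by fastforce
  then show "inner p R ((es @ [e]) ! i) ((es @ [e]) ! k) = (if i = k then 1 else 0)"
    by cases (use assms \<open>\<And>k. k < length es \<Longrightarrow> inner p R e (es ! k) = 0\<close>
        in \<open>auto simp: orthonormal_def nth_append\<close>)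
qed

lemma lin_span_eqI: "set xs \<subseteq> lin_span ys \<Longrightarrow> set ys \<subseteq> lin_span xs \<Longrightarrow> lin_span xs = lin_span ys"
  using lin_span_mono by blast

lemma lin_span_Cons_cong:
  assumes "lin_span es = lin_span vs"
  shows "lin_span (v # es) = lin_span (v # vs)"
proof -
  have "lin_span xs \<subseteq> lin_span (v # xs)" for xs :: "qvec list"
    by (rule lin_span_mono) (auto intro: in_lin_span)
  then show ?thesis using assms by (intro lin_span_eqI) (auto intro: in_lin_span)
qed

lemma orthonormal_extend:
  assumes fin: "finite R" and es: "orthonormal p R es"
    and qvecs: "\<forall>e\<in>set (v # es). is_qvec p R e"
  shows "\<exists>es'. orthonormal p R es' \<and> lin_span es' = lin_span (v # es)"
proof -
  define proj where "proj = (\<lambda>x. \<Sum>i<length es. inner p R (es ! i) v * (es ! i) x)"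
  define w where "w = (\<lambda>x. v x - proj x)"
  have es_in: "set es \<subseteq> lin_span (v # es)" and v_in: "v \<in> lin_span (v # es)"
    by (auto intro: in_lin_span)
  have proj_in: "proj \<in> lin_span zs" if "set es \<subseteq> lin_span zs" for zs
    unfolding proj_def using that by (auto intro!: subspace_sum subspace_lin_span)
  have "(\<lambda>x. v x + (-1) * proj x) \<in> lin_span (v # es)"
    using subspace_add[OF subspace_lin_span v_in subspace_scale[OF subspace_lin_span proj_in[OF es_in]]] .
  then have w_in: "w \<in> lin_span (v # es)" unfolding w_def by simp
  have w_orth: "inner p R (es ! k) w = 0" if "k < length es" for k
    unfolding w_def proj_def by (rule inner_orthogonal_residual[OF es that])
  show ?thesis
  proof (cases "inner p R w w = 0")
    case True
    then have "w = (\<lambda>x. 0)" using inner_self_eq_0[OF fin lin_span_is_qvec[OF qvecs w_in]] by simp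
    then have "v = proj" unfolding w_def by (simp add: fun_eq_iff)
    moreover have "proj \<in> lin_span es" by (rule proj_in) (auto intro: in_lin_span)
    ultimately have "v \<in> lin_span es" by simp
    then have "lin_span es = lin_span (v # es)" by (intro lin_span_eqI) (auto intro: in_lin_span)
    then show ?thesis using es by blast
  next
    case False
    then obtain s where s: "s \<noteq> 0" and e_unit: "inner p R (\<lambda>x. w x / s) (\<lambda>x. w x / s) = 1"
      using exists_normalization by blast
    define e where "e = (\<lambda>x. w x / s)"
    have e_scale: "e = (\<lambda>x. (1 / s) * w x)" unfolding e_def by simp
    have "inner p R (es ! k) e = 0" if "k < length es" for k
      using w_orth[OF that] unfolding e_scale inner_scale_right by simp
    then have on: "orthonormal p R (es @ [e])"
      using orthonormal_snoc[OF es e_unit[folded e_def]] by blast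
    have "e \<in> lin_span (v # es)" unfolding e_scale by (rule subspace_scale[OF subspace_lin_span w_in])
    moreover have "v \<in> lin_span (es @ [e])"
    proof -
      have "e \<in> lin_span (es @ [e])" by (auto intro: in_lin_span)
      moreover have "proj \<in> lin_span (es @ [e])" by (rule proj_in) (auto intro: in_lin_span)
      moreover have "v = (\<lambda>x. s * e x + proj x)"
        unfolding e_def w_def using s by (simp add: fun_eq_iff)
      ultimately show ?thesis
        using subspace_add[OF subspace_lin_span subspace_scale[OF subspace_lin_span]] by metis
    qed
    ultimately have "lin_span (es @ [e]) = lin_span (v # es)"
      using es_in by (intro lin_span_eqI) (auto intro: in_lin_span)
    then show ?thesis using on by blast
  qed
qed

lemma gram_schmidt:
  assumes fin: "finite R"
  shows "\<forall>v\<in>set vs. is_qvec p R v \<Longrightarrow> \<exists>es. orthonormal p R es \<and> lin_span es = lin_span vs"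
proof (induction vs)
  case Nil
  show ?case by (rule exI[where x = "[]"]) (simp add: orthonormal_def)
next
  case (Cons v vs)
  then obtain es where es: "orthonormal p R es" "lin_span es = lin_span vs" by auto
  have "\<forall>e\<in>set es. is_qvec p R e"
    using Cons.prems es(2) in_lin_span lin_span_is_qvec[of vs p R] by auto
  then have "\<forall>e\<in>set (v # es). is_qvec p R e" using Cons.prems by simp
  then obtain es' where "orthonormal p R es'" "lin_span es' = lin_span (v # es)"
    using orthonormal_extend[OF fin es(1)] by blast
  then show ?case using lin_span_Cons_cong[OF es(2)] by auto
qed

section \<open>Scaled projectors\<close>

lemma sum_distinct_set_nth: "distinct xs \<Longrightarrow> (\<Sum>x\<in>set xs. f x) = (\<Sum>i<length xs. f (xs ! i))"
  by (simp add: sum_list_distinct_conv_sum_set[symmetric] sum_list_sum_nth atLeast0LessThan)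

lemma lin_span_columns:
  assumes W: "is_subspace W" and cols: "\<And>u. (\<lambda>u'. rho u' u) \<in> W"
    and scalar: "\<And>v. v \<in> W \<Longrightarrow> kapply p R rho v = (\<lambda>x. c * v x)" and c: "c \<noteq> 0"
    and xs: "distinct xs" "set xs = basis p R"
  shows "lin_span (map (\<lambda>u u'. rho u' u) xs) = W"
proof
  show "lin_span (map (\<lambda>u u'. rho u' u) xs) \<subseteq> W"
    by (rule lin_span_subset[OF W]) (use cols in auto)
next
  show "W \<subseteq> lin_span (map (\<lambda>u u'. rho u' u) xs)"
  proof
    fix v assume v: "v \<in> W"
    have "v = (\<lambda>u'. \<Sum>i<length (map (\<lambda>u u'. rho u' u) xs).
                   (v (xs ! i) / c) * (map (\<lambda>u u'. rho u' u) xs ! i) u')"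
    proof
      fix u'
      have "v u' = (1 / c) * kapply p R rho v u'" using scalar[OF v] c by simp
      also have "\<dots> = (\<Sum>x\<in>set xs. (v x / c) * rho u' x)"
        unfolding kapply_def xs(2) by (simp add: sum_distrib_left mult_ac)
      also have "\<dots> = (\<Sum>i<length xs. (v (xs ! i) / c) * rho u' (xs ! i))"
        by (rule sum_distinct_set_nth[OF xs(1)])
      also have "\<dots> = (\<Sum>i<length (map (\<lambda>u u'. rho u' u) xs).
                          (v (xs ! i) / c) * (map (\<lambda>u u'. rho u' u) xs ! i) u')"
        by (intro sum.cong) auto
      finally show "v u' = \<dots>" .
    qed
    then show "v \<in> lin_span (map (\<lambda>u u'. rho u' u) xs)"
      unfolding lin_span_def mem_Collect_eq by (rule exI[where x = "\<lambda>i. v (xs ! i) / c"])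
  qed
qed

text \<open>Split the basis vector \<open>\<delta>\<^sub>u = \<pi> + r\<close> with \<open>\<pi> \<in> W\<close> and \<open>r \<perp> W\<close>: \<open>\<rho>\<close> acts on \<open>\<pi>\<close>
  as \<open>c\<close> and kills \<open>r\<close>, since the rows of the Hermitian \<open>\<rho>\<close> are conjugates of its
  columns, which lie in \<open>W\<close>.\<close>

lemma scaled_projector_eq:
  assumes fin: "finite R" and on: "orthonormal p R es" and span: "lin_span es = W"
    and W_qvec: "\<And>v. v \<in> W \<Longrightarrow> is_qvec p R v"
    and herm: "\<And>u' u. rho u' u = cnj (rho u u')"
    and cols: "\<And>u. (\<lambda>u'. rho u' u) \<in> W"
    and scalar: "\<And>v. v \<in> W \<Longrightarrow> kapply p R rho v = (\<lambda>x. c * v x)"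
  shows "rho u' u = c * (\<Sum>i<length es. (es ! i) u' * cnj ((es ! i) u))"
proof (cases "u \<in> basis p R")
  case False
  have "rho u u' = 0" using W_qvec[OF cols[of u']] False unfolding is_qvec_def by simp
  moreover have "(es ! i) u = 0" if "i < length es" for i
  proof -
    have "es ! i \<in> W" using span in_lin_span[OF nth_mem[OF that]] by simp
    then show ?thesis using W_qvec False unfolding is_qvec_def by simp
  qed
  ultimately show ?thesis using herm[of u' u] by simp
next
  case True
  define \<delta> where "\<delta> = (\<lambda>x. if x = u then (1::complex) else 0)"
  define \<pi> where "\<pi> = (\<lambda>x. \<Sum>i<length es. inner p R (es ! i) \<delta> * (es ! i) x)"
  have inner_\<delta>: "inner p R e \<delta> = cnj (e u)" for e
  proof -
    have "inner p R e \<delta> = (\<Sum>x\<in>basis p R. if x = u then cnj (e u) else 0)"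
      unfolding inner_def \<delta>_def by (intro sum.cong) auto
    then show ?thesis using True finite_basis[OF fin] by simp
  qed
  have "\<pi> \<in> W" unfolding \<pi>_def span[symmetric] lin_span_def by auto
  have "kapply p R rho \<delta> u' = (\<Sum>x\<in>basis p R. if x = u then rho u' u else 0)"
    unfolding kapply_def \<delta>_def by (intro sum.cong) auto
  then have "rho u' u = kapply p R rho \<delta> u'" using True finite_basis[OF fin] by simp
  also have "\<dots> = kapply p R rho \<pi> u' + kapply p R rho (\<lambda>x. \<delta> x - \<pi> x) u'"
    unfolding kapply_def by (simp add: sum.distrib[symmetric] algebra_simps)
  also have "kapply p R rho \<pi> u' = c * \<pi> u'" using scalar[OF \<open>\<pi> \<in> W\<close>] by simp
  also have "kapply p R rho (\<lambda>x. \<delta> x - \<pi> x) u' = inner p R (\<lambda>x. rho x u') (\<lambda>x. \<delta> x - \<pi> x)"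
    unfolding kapply_def inner_def by (intro sum.cong refl) (simp add: herm[symmetric])
  also have "\<dots> = 0"
    unfolding \<pi>_def
    by (rule inner_lin_span_orthogonal[OF inner_orthogonal_residual[OF on]]) (use cols span in auto)
  finally show ?thesis unfolding \<pi>_def inner_\<delta> by (simp add: mult.commute sum_distrib_left)
qed

lemma sum_basis_outer_orthonormal:
  assumes "orthonormal p R es"
  shows "(\<Sum>u\<in>basis p R. \<Sum>i<length es. (es ! i) u * cnj ((es ! i) u)) = of_nat (length es)"
proof -
  have "(\<Sum>u\<in>basis p R. \<Sum>i<length es. (es ! i) u * cnj ((es ! i) u))
      = (\<Sum>i<length es. inner p R (es ! i) (es ! i))"
    unfolding inner_def by (subst sum.swap) (simp add: mult.commute)
  also have "\<dots> = (\<Sum>i<length es. 1)" using assms unfolding orthonormal_def by simp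
  finally show ?thesis by simp
qed

lemma completely_mixedI:
  assumes fin: "finite R" and W: "is_subspace W" and W_qvec: "\<And>v. v \<in> W \<Longrightarrow> is_qvec p R v"
    and herm: "\<And>u' u. rho u' u = cnj (rho u u')"
    and cols: "\<And>u. (\<lambda>u'. rho u' u) \<in> W"
    and scalar: "\<And>v. v \<in> W \<Longrightarrow> kapply p R rho v = (\<lambda>x. c * v x)" and c: "c \<noteq> 0"
    and trace: "(\<Sum>u\<in>basis p R. rho u u) = 1"
  shows "completely_mixed p R rho W"
proof -
  obtain xs where xs: "distinct xs" "set xs = basis p R"
    using finite_distinct_list[OF finite_basis[OF fin]] by metis
  have "\<forall>v\<in>set (map (\<lambda>u u'. rho u' u) xs). is_qvec p R v" using W_qvec cols by auto
  then obtain es where on: "orthonormal p R es" and span: "lin_span es = W"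
    using gram_schmidt[OF fin] lin_span_columns[OF W cols scalar c xs] by metis
  let ?k = "length es"
  have decomp: "rho u' u = c * (\<Sum>i<?k. (es ! i) u' * cnj ((es ! i) u))" for u' u
    by (rule scaled_projector_eq[OF fin on span W_qvec herm cols scalar])
  have "1 = c * of_nat ?k"
    using trace sum_basis_outer_orthonormal[OF on] by (simp add: decomp sum_distrib_left[symmetric])
  then have "?k \<noteq> 0" and "c = 1 / of_nat ?k"
    by (auto simp: eq_divide_eq mult.commute)
  then show ?thesis
    unfolding completely_mixed_def is_onb_iff using on span
    by (intro exI[of _ es]) (auto simp: fun_eq_iff decomp)
qed

section \<open>States of self-dual codes\<close>

lemma xi_symp_neq_1:
  assumes "p > 0" and "symp p R z y \<noteq> 0"
  shows "cnj (xi p (dot_on R (snd y) (fst z))) * xi p (dot_on R (snd z) (fst y)) \<noteq> 1"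
proof
  assume "cnj (xi p (dot_on R (snd y) (fst z))) * xi p (dot_on R (snd z) (fst y)) = 1"
  then have "(dot_on R (snd z) (fst y) - dot_on R (snd y) (fst z)) mod int p = 0"
    using xi_eq_1_iff[OF assms(1)] by (simp add: xi_cnj xi_add[symmetric])
  then have "(dot_on R (fst z) (snd y) - dot_on R (snd z) (fst y)) mod int p = 0"
    by (metis dot_on_commute minus_diff_eq mod_minus_eq neg_equal_0_iff_equal)
  moreover have "symp p R z y = (dot_on R (fst z) (snd y) - dot_on R (snd z) (fst y)) mod int p"
    unfolding symp_def dot_on_def by (simp add: sum_subtractf)
  ultimately show False using assms(2) by simp
qed

locale self_dual_state =
  fixes p :: nat and R :: "nat set" and C :: "fpvec set"
    and lam :: "kern \<Rightarrow> complex" and phi :: qvec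
  assumes p_gt_1: "1 < p" and finite_R: "finite R"
    and self_dual: "C = symp_dual p R C"
    and phi_in_qspace: "phi \<in> qspace p R C lam"
    and phi_normalized: "inner p R phi phi = 1"
begin

lemma p_pos: "0 < p"
  using p_gt_1 by simp

lemma phi_is_qvec: "is_qvec p R phi"
  using phi_in_qspace by (rule qspace_is_qvec)

lemma C_subset_fp_vecs: "C \<subseteq> fp_vecs p R"
  using self_dual unfolding symp_dual_def by blast

lemma phi_eigen:
  "y \<in> C \<Longrightarrow> x \<in> basis p R \<Longrightarrow>
    xi p (dot_on R (snd y) x) * phi x = lam (pauli p R y) * phi (shift p R x (fst y))"
  using pauli_eigen_iff[OF p_pos finite_R phi_is_qvec] qspace_pauli[OF phi_in_qspace] by blast

lemma expectation_pauli_code: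
  "y \<in> C \<Longrightarrow> inner p R phi (kapply p R (pauli p R y) phi) = lam (pauli p R y)"
  using qspace_pauli[OF phi_in_qspace] inner_scale_right phi_normalized by simp

lemma eigenvalue_unit:
  assumes y: "y \<in> C"
  shows "cnj (lam (pauli p R y)) * lam (pauli p R y) = 1"
proof -
  let ?E = "kapply p R (pauli p R y) phi"
  have "inner p R ?E ?E = cnj (lam (pauli p R y)) * lam (pauli p R y)"
    unfolding qspace_pauli[OF phi_in_qspace y] inner_scale_left inner_scale_right phi_normalized
    by simp
  moreover have "inner p R ?E ?E = (\<Sum>x\<in>basis p R. cnj (?E (shift p R x (fst y))) * ?E (shift p R x (fst y)))"
    unfolding inner_def using sum_shift[OF p_pos, of "\<lambda>x. cnj (?E x) * ?E x"] by simp
  moreover have "\<dots> = inner p R phi phi"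
    unfolding inner_def using kapply_pauli_shift[OF p_pos _ finite_R]
    by (intro sum.cong refl) (simp add: mult_ac)
  ultimately show ?thesis using phi_normalized by simp
qed

lemma phi_shift:
  assumes y: "y \<in> C" and x: "x \<in> basis p R"
  shows "phi (shift p R x (fst y)) = cnj (lam (pauli p R y)) * xi p (dot_on R (snd y) x) * phi x"
  using phi_eigen[OF y x] eigenvalue_unit[OF y]
  by (metis (no_types, lifting) mult.assoc mult.left_commute mult_1)

text \<open>Self-duality provides \<open>y \<in> C\<close> whose Pauli operator commutes with \<open>E\<^sub>z\<close> only up to a
  nontrivial phase \<open>\<omega>\<close>; conjugating by \<open>E\<^sub>y\<close>, which fixes \<open>\<phi>\<close> up to a unimodular factor, shows
  that the expectation of \<open>E\<^sub>z\<close> equals \<open>\<omega>\<close> times itself.\<close>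

lemma expectation_pauli_non_code:
  assumes z: "z \<in> fp_vecs p R" and z_notin: "z \<notin> C"
  shows "inner p R phi (kapply p R (pauli p R z) phi) = 0"
proof -
  obtain y where y: "y \<in> C" "symp p R z y \<noteq> 0"
    using z z_notin self_dual unfolding symp_dual_def by blast
  define a where "a = fst z"
  define \<omega> where "\<omega> = cnj (xi p (dot_on R (snd y) a)) * xi p (dot_on R (snd z) (fst y))"
  define I where "I = (\<Sum>x\<in>basis p R. cnj (phi (shift p R x a)) * xi p (dot_on R (snd z) x) * phi x)"
  have m: "cnj (lam (pauli p R y)) * lam (pauli p R y) = 1" by (rule eigenvalue_unit[OF y(1)])
  have "I = (\<Sum>x\<in>basis p R. cnj (phi (shift p R (shift p R x (fst y)) a))
              * xi p (dot_on R (snd z) (shift p R x (fst y))) * phi (shift p R x (fst y)))"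
    unfolding I_def by (rule sum_shift[OF p_pos, symmetric])
  also have "\<dots> = (\<Sum>x\<in>basis p R. \<omega> * (cnj (phi (shift p R x a)) * xi p (dot_on R (snd z) x) * phi x))"
  proof (intro sum.cong refl)
    fix x assume x: "x \<in> basis p R"
    have sx: "shift p R x a \<in> basis p R" by (rule shift_in_basis[OF p_pos])
    let ?m = "lam (pauli p R y)" and ?xi = "xi p (dot_on R (snd y) x)"
    have "cnj (phi (shift p R (shift p R x (fst y)) a))
              * xi p (dot_on R (snd z) (shift p R x (fst y))) * phi (shift p R x (fst y))
        = cnj (cnj ?m * xi p (dot_on R (snd y) (shift p R x a)) * phi (shift p R x a))
            * (xi p (dot_on R (snd z) x) * xi p (dot_on R (snd z) (fst y))) * (cnj ?m * ?xi * phi x)"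
      unfolding shift_commute[of p R x "fst y" a] phi_shift[OF y(1) sx] phi_shift[OF y(1) x]
        xi_dot_on_shift[OF p_pos] ..
    also have "\<dots> = (?m * cnj ?m) * (cnj ?xi * ?xi) * \<omega>
        * (cnj (phi (shift p R x a)) * xi p (dot_on R (snd z) x) * phi x)"
      unfolding xi_dot_on_shift[OF p_pos] \<omega>_def by (simp add: mult_ac)
    finally show "cnj (phi (shift p R (shift p R x (fst y)) a))
              * xi p (dot_on R (snd z) (shift p R x (fst y))) * phi (shift p R x (fst y))
        = \<omega> * (cnj (phi (shift p R x a)) * xi p (dot_on R (snd z) x) * phi x)"
      using m by (simp add: mult.commute)
  qed
  also have "\<dots> = \<omega> * I" unfolding I_def by (simp add: sum_distrib_left)
  finally have "I = \<omega> * I" .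
  moreover have "\<omega> \<noteq> 1" unfolding \<omega>_def a_def by (rule xi_symp_neq_1[OF p_pos y(2)])
  ultimately have "I = 0" by (metis mult_cancel_right1)
  then show ?thesis unfolding I_def a_def inner_pauli_right[OF p_pos finite_R] .
qed

end

locale reduced_state = self_dual_state +
  fixes J :: "nat set" and lamJ :: "kern \<Rightarrow> complex"
  assumes J_subset: "J \<subseteq> R"
    and char_J: "is_char p J (sigma J C) lamJ"
    and char_compatible: "\<forall>z\<in>sigma J C. lamJ (pauli p J z) = lam (pauli p R z)"
begin

definition rho :: kern where
  "rho = ptrace p R J (proj_vec phi)"

lemma finite_J: "finite J"
  using finite_R J_subset by (rule finite_subset[rotated])

lemma rho_eq:
  "rho u' u = (if u' \<in> basis p J \<and> u \<in> basis p J
     then (\<Sum>w\<in>basis p (R - J). phi (merge J u' w) * cnj (phi (merge J u w))) else 0)"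
  unfolding rho_def ptrace_def proj_vec_def merge_def by simp

lemma rho_hermitian: "rho u' u = cnj (rho u u')"
  unfolding rho_eq by (simp add: mult.commute)

lemma rho_trace: "(\<Sum>u\<in>basis p J. rho u u) = 1"
proof -
  have "(\<Sum>u\<in>basis p J. rho u u)
      = (\<Sum>u\<in>basis p J. \<Sum>w\<in>basis p (R - J). phi (merge J u w) * cnj (phi (merge J u w)))"
    unfolding rho_eq by simp
  also have "\<dots> = (\<Sum>x\<in>basis p R. phi x * cnj (phi x))"
    by (rule sum_basis_merge[OF J_subset, symmetric])
  also have "\<dots> = inner p R phi phi" unfolding inner_def by (simp add: mult.commute)
  finally show ?thesis using phi_normalized by simp
qed

lemma sigma_subset: "sigma J C \<subseteq> fp_vecs p J"
proof
  fix z assume "z \<in> sigma J C"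
  then have "z \<in> fp_vecs p R" "\<forall>j. j \<notin> J \<longrightarrow> fst z j = 0 \<and> snd z j = 0"
    using C_subset_fp_vecs unfolding sigma_def by auto
  then show "z \<in> fp_vecs p J" using J_subset unfolding fp_vecs_def by auto
qed

lemma sigma_finite: "finite (sigma J C)"
  using sigma_subset finite_fp_vecs[OF finite_J] by (rule finite_subset)

lemma zero_in_sigma: "((\<lambda>_. 0), (\<lambda>_. 0)) \<in> sigma J C"
proof -
  have "((\<lambda>_. 0), (\<lambda>_. 0)) \<in> symp_dual p R C"
    unfolding symp_dual_def fp_vecs_def symp_def using p_pos by auto
  then show ?thesis using self_dual unfolding sigma_def by auto
qed

lemma pauli_coeff_rho:
  assumes z: "z \<in> fp_vecs p J"
  shows "pauli_coeff p J z rho = cnj (inner p R phi (kapply p R (pauli p R z) phi))"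
proof -
  obtain a b where ab: "z = (a, b)" "a \<in> basis p J" "b \<in> basis p J"
    using z unfolding fp_vecs_eq_basis_times by auto
  have "cnj (inner p R phi (kapply p R (pauli p R z) phi))
      = (\<Sum>x\<in>basis p R. phi (shift p R x a) * cnj (xi p (dot_on R b x)) * cnj (phi x))"
    unfolding inner_pauli_right[OF p_pos finite_R] ab by simp
  also have "\<dots> = (\<Sum>u\<in>basis p J. \<Sum>w\<in>basis p (R - J). phi (shift p R (merge J u w) a)
                    * cnj (xi p (dot_on R b (merge J u w))) * cnj (phi (merge J u w)))"
    by (rule sum_basis_merge[OF J_subset])
  also have "\<dots> = (\<Sum>u\<in>basis p J. \<Sum>w\<in>basis p (R - J). cnj (xi p (dot_on J b u))
                    * (phi (merge J (shift p J u a) w) * cnj (phi (merge J u w))))"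
    using shift_merge[OF J_subset _ ab(2)] dot_on_merge[OF finite_R J_subset ab(3)]
    by (intro sum.cong refl) (simp add: mult_ac)
  also have "\<dots> = pauli_coeff p J z rho"
    unfolding pauli_coeff_def ab rho_eq using shift_in_basis[OF p_pos] by (simp add: sum_distrib_left)
  finally show ?thesis by simp
qed

lemma pauli_coeff_rho_action:
  assumes z: "z \<in> fp_vecs p J" and v: "v \<in> qspace p J (sigma J C) lamJ"
  shows "pauli_coeff p J z rho * kapply p J (pauli p J z) v u = (if z \<in> sigma J C then v u else 0)"
proof (cases "z \<in> sigma J C")
  case True
  then have "z \<in> C" unfolding sigma_def by simp
  moreover have "kapply p J (pauli p J z) v u = lam (pauli p R z) * v u"
    using qspace_pauli[OF v True] char_compatible True by simp
  ultimately show ?thesis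
    using True pauli_coeff_rho[OF z] expectation_pauli_code eigenvalue_unit by simp
next
  case False
  then have "z \<notin> C" using z unfolding sigma_def fp_vecs_def by auto
  moreover have "z \<in> fp_vecs p R"
    using z J_subset p_pos basis_mono unfolding fp_vecs_eq_basis_times by blast
  ultimately show ?thesis
    using False pauli_coeff_rho[OF z] expectation_pauli_non_code by simp
qed

lemma rho_scalar_on_qspace:
  assumes v: "v \<in> qspace p J (sigma J C) lamJ"
  shows "kapply p J rho v = (\<lambda>x. of_nat (card (sigma J C)) / of_nat p ^ card J * v x)"
proof
  fix u'
  let ?P = "of_nat p ^ card J :: complex"
  have "rho u' u = 0" if "u' \<notin> basis p J \<or> u \<notin> basis p J" for u' u
    using that unfolding rho_eq by auto
  then have "kapply p J rho v u'
      = (\<Sum>u\<in>basis p J. (\<Sum>z\<in>fp_vecs p J. pauli_coeff p J z rho * pauli p J z u' u) / ?P * v u)"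
    unfolding kapply_def by (subst pauli_expansion[OF p_gt_1 finite_J]) simp_all
  also have "\<dots> = (\<Sum>z\<in>fp_vecs p J. pauli_coeff p J z rho * kapply p J (pauli p J z) v u') / ?P"
    unfolding kapply_def
    by (simp add: sum_divide_distrib sum_distrib_left sum_distrib_right mult_ac) (rule sum.swap)
  also have "\<dots> = (\<Sum>z\<in>fp_vecs p J. if z \<in> sigma J C then v u' else 0) / ?P"
    using pauli_coeff_rho_action[OF _ v] by simp
  also have "\<dots> = of_nat (card (sigma J C)) * v u' / ?P"
    using sum.inter_restrict[OF finite_fp_vecs[OF finite_J, of p], of "\<lambda>_. v u'" "sigma J C"] sigma_subset
    by (simp add: Int_absorb1 inf.commute)
  finally show "kapply p J rho v u' = of_nat (card (sigma J C)) / ?P * v u'" by simp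
qed

lemma phi_slice_in_qspace:
  assumes w: "w \<in> basis p (R - J)"
  shows "(\<lambda>u. if u \<in> basis p J then phi (merge J u w) else 0) \<in> qspace p J (sigma J C) lamJ"
    (is "?f \<in> _")
proof (rule qspaceI_generators[OF finite_J p_pos char_J])
  show q: "is_qvec p J ?f" unfolding is_qvec_def by simp
  fix z assume z: "z \<in> sigma J C"
  obtain a b where ab: "z = (a, b)" "a \<in> basis p J" "b \<in> basis p J"
    using sigma_subset z unfolding fp_vecs_eq_basis_times by auto
  have zC: "z \<in> C" using z unfolding sigma_def by simp
  show "kapply p J (pauli p J z) ?f = (\<lambda>x. lamJ (pauli p J z) * ?f x)"
    unfolding pauli_eigen_iff[OF p_pos finite_J q]
  proof
    fix u assume u: "u \<in> basis p J"
    have "xi p (dot_on R b (merge J u w)) * phi (merge J u w)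
        = lam (pauli p R z) * phi (shift p R (merge J u w) a)"
      using phi_eigen[OF zC merge_in_basis[OF J_subset u w]] ab by simp
    then show "xi p (dot_on J (snd z) u) * ?f u = lamJ (pauli p J z) * ?f (shift p J u (fst z))"
      using dot_on_merge[OF finite_R J_subset ab(3)] shift_merge[OF J_subset w ab(2)]
        char_compatible z u ab shift_in_basis[OF p_pos] by simp
  qed
qed

lemma rho_column_in_qspace: "(\<lambda>u'. rho u' u) \<in> qspace p J (sigma J C) lamJ"
proof (cases "u \<in> basis p J")
  case True
  have "(\<lambda>u'. rho u' u) = (\<lambda>u'. \<Sum>w\<in>basis p (R - J). cnj (phi (merge J u w)) *
          (\<lambda>w u. if u \<in> basis p J then phi (merge J u w) else 0) w u')"
    unfolding rho_eq using True by (auto simp: fun_eq_iff mult.commute)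
  also have "\<dots> \<in> qspace p J (sigma J C) lamJ"
    using finite_basis[OF finite_Diff[OF finite_R]]
    by (intro subspace_sum subspace_qspace phi_slice_in_qspace)
  finally show ?thesis .
next
  case False
  then have "(\<lambda>u'. rho u' u) = (\<lambda>u'. 0)" unfolding rho_eq by simp
  also have "\<dots> \<in> qspace p J (sigma J C) lamJ"
    using subspace_qspace unfolding is_subspace_def by blast
  finally show ?thesis .
qed

lemma completely_mixed_rho: "completely_mixed p J rho (qspace p J (sigma J C) lamJ)"
proof (rule completely_mixedI[OF finite_J subspace_qspace qspace_is_qvec rho_hermitian
      rho_column_in_qspace rho_scalar_on_qspace _ rho_trace])
  show "of_nat (card (sigma J C)) / of_nat p ^ card J \<noteq> (0::complex)"
    using zero_in_sigma sigma_finite p_pos by (auto simp: card_eq_0_iff)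
qed

end

theorem lemma15:
  fixes p n :: nat and C :: "fpvec set" and J :: "nat set"
    and lam lamJ :: "kern \<Rightarrow> complex" and phi :: qvec
  assumes "prime p"
    and "is_code p {1..n} C"
    and "C = symp_dual p {1..n} C"
    and "J \<noteq> {}" and "J \<subset> {1..n}"
    and "is_char p {1..n} C lam"
    and "is_char p J (sigma J C) lamJ"
    and "\<forall>z\<in>sigma J C. lamJ (pauli p J z) = lam (pauli p {1..n} z)"
    and "phi \<in> qspace p {1..n} C lam"
    and "inner p {1..n} phi phi = 1"
  shows "completely_mixed p J (ptrace p {1..n} J (proj_vec phi)) (qspace p J (sigma J C) lamJ)"
proof -
  interpret reduced_state p "{1..n}" C lam phi J lamJ
    by unfold_locales (use assms prime_gt_1_nat in auto)
  show ?thesis using completely_mixed_rho unfolding rho_def .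
qed

end
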